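(* Let $m\geq 17$ and $k\geq 1$ be integers and let $c(x)=1+\sum_{j\in\{1,3,5,6,8\}}(x^j+x^{m-j})\in\mathbb{F}_2[x]$. Then $\gcd(c(x^k),x^m-1)=1$ if and only if $\gcd(m,3k)=\gcd(m,7k)=\gcd(m,k)$.
   Context: All polynomials are over $\mathbb{F}_2$. *)

theory Defs
  imports "HOL-Computational_Algebra.Polynomial_Factorial" "Berlekamp_Zassenhaus.Finite_Field"
begin

text \<open>F_2 is rendered as the AFP prime field type bool mod_ring (CARD(bool) = 2).\<close>
type_synonym F2 = "bool mod_ring"

definition c_poly :: "nat \<Rightarrow> F2 poly" where
  "c_poly m = 1 + (\<Sum>j\<in>{1,3,5,6,8::nat}. monom 1 j + monom 1 (m - j))"

end

theory Submission
  imports Defs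
begin

text \<open>
  Write \<open>P\<^sub>p(y) = 1 + y + ... + y^(p-1)\<close>. Over \<open>\<bbbF>\<^sub>2\<close> one has
  \<open>y^8 c(y) = (y^m - 1)(1 + y^2 + y^3 + y^5 + y^7) + P\<^sub>3(y)^5 P\<^sub>7(y)\<close>; taking \<open>y = x^k\<close>,
  where \<open>x^m - 1\<close> divides \<open>y^m - 1\<close> and \<open>x\<close> is coprime to \<open>x^m - 1\<close>, the theorem reduces to
  deciding when \<open>P\<^sub>p(x^k)\<close> is coprime to \<open>x^m - 1\<close> for \<open>p = 3, 7\<close>.
  A common divisor of the two divides \<open>x^pk - 1\<close> and \<open>x^m - 1\<close>, hence \<open>x^gcd(m,pk) - 1\<close>.
  If \<open>gcd(m,pk) = gcd(m,k)\<close>, it thus divides \<open>x^k - 1\<close> and so \<open>P\<^sub>p(x^k) - p = P\<^sub>p(x^k) - 1\<close>,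
  i.e. it is a unit. Otherwise, with \<open>g = gcd(m,k)\<close>, \<open>pg\<close> divides \<open>m\<close> but not \<open>k\<close>, and the
  non-constant polynomial \<open>P\<^sub>p(x^g)\<close> divides both \<open>x^pg - 1\<close> and \<open>P\<^sub>p(x^k)\<close>.
\<close>

lemma power_minus_one_dvd_power_minus_one:
  fixes x :: "'a::comm_ring_1"
  assumes "a dvd b"
  shows "x ^ a - 1 dvd x ^ b - 1"
proof -
  obtain t where "b = a * t" using assms by blast
  then have "x ^ b - 1 = (x ^ a - 1) * (\<Sum>i<t. (x ^ a) ^ i)"
    by (simp add: power_mult power_diff_1_eq)
  then show ?thesis by simp
qed

lemma dvd_power_minus_one_gcd:
  fixes x :: "'a::comm_ring_1"
  assumes a: "d dvd x ^ a - 1" and b: "d dvd x ^ b - 1"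
  shows "d dvd x ^ gcd a b - 1"
proof (cases "a = 0")
  case True
  with b show ?thesis by simp
next
  case False
  then obtain s t where st: "a * s = b * t + gcd a b" using bezout_nat by blast
  have "d dvd x ^ (a * s) - 1"
    using a power_minus_one_dvd_power_minus_one[of a "a * s" x] by (meson dvd_trans dvd_triv_left)
  moreover have "d dvd x ^ (b * t) - 1"
    using b power_minus_one_dvd_power_minus_one[of b "b * t" x] by (meson dvd_trans dvd_triv_left)
  moreover have "x ^ gcd a b - 1 = (x ^ (a * s) - 1) - x ^ gcd a b * (x ^ (b * t) - 1)"
    unfolding st by (simp add: power_add algebra_simps)
  ultimately show ?thesis by (metis dvd_diff dvd_mult)
qed

lemma geometric_sum_dvd_power_minus_one:
  fixes y :: "'a::comm_ring_1"
  shows "(\<Sum>i<p. y ^ i) dvd y ^ p - 1"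
  by (simp add: power_diff_1_eq)

lemma minus_one_dvd_geometric_sum_minus_of_nat:
  fixes y :: "'a::comm_ring_1"
  shows "y - 1 dvd (\<Sum>i<p. y ^ i) - of_nat p"
proof -
  have "(\<Sum>i<p. y ^ i) - of_nat p = (\<Sum>i<p. y ^ i - 1)"
    by (simp add: sum_subtractf)
  also have "y - 1 dvd \<dots>"
    by (intro dvd_sum) (simp add: power_diff_1_eq)
  finally show ?thesis .
qed

lemma coprime_self_power_minus_one:
  fixes x :: "'a::{comm_ring_1, algebraic_semidom}"
  assumes "m > 0"
  shows "coprime x (x ^ m - 1)"
proof (rule coprimeI)
  fix d
  assume "d dvd x" and "d dvd x ^ m - 1"
  moreover have "x dvd x ^ m"
    using assms by simp
  ultimately have "d dvd x ^ m - (x ^ m - 1)"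
    by (meson dvd_diff dvd_trans)
  then show "is_unit d" by simp
qed

lemma coprime_geometric_sum_power_minus_one:
  fixes x :: "'a::{comm_ring_1, algebraic_semidom}"
  assumes p: "of_nat p = (1::'a)" and gcd_eq: "gcd m (p * k) = gcd m k"
  shows "coprime (\<Sum>i<p. (x ^ k) ^ i) (x ^ m - 1)"
proof (rule coprimeI)
  fix d
  assume d_sum: "d dvd (\<Sum>i<p. (x ^ k) ^ i)" and d_m: "d dvd x ^ m - 1"
  have "d dvd x ^ (p * k) - 1"
    using dvd_trans[OF d_sum geometric_sum_dvd_power_minus_one]
    by (simp add: power_mult mult.commute)
  with d_m have "d dvd x ^ gcd m k - 1"
    using dvd_power_minus_one_gcd gcd_eq by metis
  also have "x ^ gcd m k - 1 dvd x ^ k - 1"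
    by (rule power_minus_one_dvd_power_minus_one) simp
  also have "x ^ k - 1 dvd (\<Sum>i<p. (x ^ k) ^ i) - 1"
    using minus_one_dvd_geometric_sum_minus_of_nat[of "x ^ k" p] p by simp
  finally have "d dvd (\<Sum>i<p. (x ^ k) ^ i) - ((\<Sum>i<p. (x ^ k) ^ i) - 1)"
    using d_sum by (rule dvd_diff[rotated])
  then show "is_unit d" by simp
qed

lemma geometric_sum_dvd_geometric_sum_power:
  fixes y :: "'a::ring_gcd"
  assumes p: "of_nat p = (1::'a)" and "coprime p n"
  shows "(\<Sum>i<p. y ^ i) dvd (\<Sum>i<p. (y ^ n) ^ i)"
proof -
  have "gcd n (p * 1) = gcd n 1"
    using \<open>coprime p n\<close> by (simp add: coprime_commute)
  then have cop: "coprime (\<Sum>i<p. y ^ i) (y ^ n - 1)"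
    using coprime_geometric_sum_power_minus_one[OF p, of n 1 y] by simp
  have "(\<Sum>i<p. y ^ i) dvd y ^ p - 1"
    by (rule geometric_sum_dvd_power_minus_one)
  also have "y ^ p - 1 dvd (y ^ n) ^ p - 1"
    by (simp add: power_minus_one_dvd_power_minus_one flip: power_mult)
  also have "(y ^ n) ^ p - 1 = (y ^ n - 1) * (\<Sum>i<p. (y ^ n) ^ i)"
    by (rule power_diff_1_eq)
  finally show ?thesis
    using cop coprime_dvd_mult_right_iff by blast
qed

lemma prime_mult_gcd_dvd_if_gcd_mult_neq:
  fixes m k p :: nat
  assumes "prime p" and "m > 0" and "gcd m (p * k) \<noteq> gcd m k"
  shows "p * gcd m k dvd m" and "\<not> p dvd k div gcd m k"
proof -
  define g where "g = gcd m k"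
  have "g dvd gcd m (p * k)"
    by (simp add: g_def)
  then obtain t where t: "gcd m (p * k) = g * t" by blast
  have "gcd m (p * k) dvd gcd (p * m) (p * k)"
    by (simp add: dvd_mult)
  also have "gcd (p * m) (p * k) = g * p"
    by (simp add: gcd_mult_distrib_nat g_def mult.commute)
  finally have "g * t dvd g * p"
    by (simp add: t)
  moreover have "g > 0"
    using \<open>m > 0\<close> by (simp add: g_def)
  ultimately have "t dvd p" by simp
  moreover have "t \<noteq> 1"
    using assms(3) t g_def by auto
  ultimately have "t = p"
    using \<open>prime p\<close> by (metis prime_nat_iff)
  then show pg_m: "p * g dvd m"
    using t by (metis gcd_dvd1 mult.commute)
  show "\<not> p dvd k div g"
  proof
    assume "p dvd k div g"
    then have "p * g dvd (k div g) * g"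
      by (rule mult_dvd_mono) simp
    then have "p * g dvd k"
      by (simp add: g_def)
    with pg_m have "p * g dvd g"
      by (simp add: g_def)
    with \<open>g > 0\<close> \<open>prime p\<close> show False
      by (simp add: prime_nat_iff)
  qed
qed

lemma geometric_sum_monom_not_unit:
  assumes "g > 0" and "p > 1"
  shows "\<not> is_unit (\<Sum>i<p. ([:0, 1:] ^ g) ^ i :: 'a::idom_divide poly)"
proof
  assume "is_unit (\<Sum>i<p. ([:0, 1:] ^ g) ^ i :: 'a poly)"
  then obtain c where c: "(\<Sum>i<p. ([:0, 1:] ^ g) ^ i :: 'a poly) = [:c:]"
    using is_unit_poly_iff by blast
  have "(\<Sum>i<p. ([:0, 1:] ^ g) ^ i :: 'a poly) = (\<Sum>i<p. monom 1 (g * i))"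
    by (simp add: monom_altdef power_mult)
  then have "coeff (\<Sum>i<p. ([:0, 1:] ^ g) ^ i :: 'a poly) g = (\<Sum>i<p. if i = 1 then 1 else 0)"
    using \<open>g > 0\<close> by (simp add: coeff_sum coeff_monom)
  also have "\<dots> = 1"
    using \<open>p > 1\<close> by simp
  finally show False
    using c \<open>g > 0\<close> by (cases g) simp_all
qed

lemma coprime_geometric_sum_monom_iff:
  fixes m k p :: nat
  assumes "prime p" and p: "of_nat p = (1::'a::field_gcd)" and "m > 0"
  shows "coprime (\<Sum>i<p. ([:0, 1:] ^ k) ^ i :: 'a poly) ([:0, 1:] ^ m - 1)
    \<longleftrightarrow> gcd m (p * k) = gcd m k"
proof
  have p_poly: "of_nat p = (1::'a poly)"
    using p by (metis of_nat_poly pCons_one)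
  show "gcd m (p * k) = gcd m k" if cop: "coprime (\<Sum>i<p. ([:0, 1:] ^ k) ^ i :: 'a poly) ([:0, 1:] ^ m - 1)"
  proof (rule ccontr)
    assume neq: "gcd m (p * k) \<noteq> gcd m k"
    define g where "g = gcd m k"
    define Z :: "'a poly" where "Z = [:0, 1:] ^ g"
    have "coprime p (k div g)"
      using prime_mult_gcd_dvd_if_gcd_mult_neq(2)[OF \<open>prime p\<close> \<open>m > 0\<close> neq] \<open>prime p\<close>
      by (simp add: g_def prime_imp_coprime)
    then have "(\<Sum>i<p. Z ^ i) dvd (\<Sum>i<p. (Z ^ (k div g)) ^ i)"
      by (rule geometric_sum_dvd_geometric_sum_power[OF p_poly])
    moreover have "Z ^ (k div g) = [:0, 1:] ^ k"
      by (simp add: Z_def g_def flip: power_mult)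
    moreover have "(\<Sum>i<p. Z ^ i) dvd [:0, 1:] ^ m - 1"
    proof -
      have "(\<Sum>i<p. Z ^ i) dvd [:0, 1:] ^ (g * p) - 1"
        using geometric_sum_dvd_power_minus_one[of Z p] by (simp add: Z_def power_mult)
      also have "\<dots> dvd [:0, 1:] ^ m - 1"
        using prime_mult_gcd_dvd_if_gcd_mult_neq(1)[OF \<open>prime p\<close> \<open>m > 0\<close> neq]
        by (intro power_minus_one_dvd_power_minus_one) (simp add: g_def mult.commute)
      finally show ?thesis .
    qed
    moreover have "\<not> is_unit (\<Sum>i<p. Z ^ i)"
      unfolding Z_def using \<open>m > 0\<close> prime_gt_1_nat[OF \<open>prime p\<close>]
      by (intro geometric_sum_monom_not_unit) (simp_all add: g_def)
    ultimately show False
      using cop not_coprimeI by metis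
  qed
  show "coprime (\<Sum>i<p. ([:0, 1:] ^ k) ^ i :: 'a poly) ([:0, 1:] ^ m - 1)"
    if "gcd m (p * k) = gcd m k"
    using coprime_geometric_sum_power_minus_one[OF p_poly that] .
qed

lemma geometric_sums_3_7_char_two:
  fixes y :: "'a::comm_ring_1"
  assumes "(2::'a) = 0"
  shows "(\<Sum>i<3. y ^ i) ^ 5 * (\<Sum>i<7. y ^ i)
    = 1 + y^2 + y^3 + y^5 + y^7 + y^8 + y^9 + y^11 + y^13 + y^14 + y^16"
proof -
  have "(\<Sum>i<3. y ^ i) ^ 5 * (\<Sum>i<7. y ^ i)
    = (1 + y^2 + y^3 + y^5 + y^7 + y^8 + y^9 + y^11 + y^13 + y^14 + y^16)
      + 2 * (3 * y + 10 * y^2 + 25 * y^3 + 48 * y^4 + 73 * y^5 + 96 * y^6 + 110 * y^7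
        + 115 * y^8 + 110 * y^9 + 96 * y^10 + 73 * y^11 + 48 * y^12 + 25 * y^13
        + 10 * y^14 + 3 * y^15)"
    by (simp add: eval_nat_numeral algebra_simps)
  with assms show ?thesis by simp
qed

lemma power_8_mult_c_sum:
  fixes y :: "'a::comm_ring_1"
  assumes "m \<ge> 8"
  shows "y^8 * (1 + (\<Sum>j\<in>{1,3,5,6,8::nat}. y ^ j + y ^ (m - j)))
    = y^8 + y^9 + y^11 + y^13 + y^14 + y^16 + y ^ m * (1 + y^2 + y^3 + y^5 + y^7)"
proof -
  obtain n where "m = n + 8"
    using assms le_Suc_ex by (metis add.commute)
  then show ?thesis
    by (simp add: power_add eval_nat_numeral algebra_simps)
qed

lemma pcompose_monom_one: "pcompose (monom 1 n) q = q ^ n"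
  by (induction n) (simp_all add: monom_altdef pcompose_mult pcompose_pCons)

lemma pcompose_c_poly:
  "pcompose (c_poly m) q = 1 + (\<Sum>j\<in>{1,3,5,6,8::nat}. q ^ j + q ^ (m - j))"
  by (simp add: c_poly_def pcompose_add pcompose_sum pcompose_monom_one)

lemma two_eq_zero_F2: "(2::F2) = 0"
  using of_nat_card_eq_0[where 'a = bool] by simp

lemma of_nat_odd_F2:
  assumes "odd p"
  shows "of_nat p = (1::F2)"
proof -
  obtain q where "p = 2 * q + 1"
    using assms oddE by blast
  then show ?thesis
    using two_eq_zero_F2 by simp
qed

lemma power_8_mult_pcompose_c_poly_F2:
  fixes y :: "F2 poly"
  assumes "m \<ge> 8"
  shows "y^8 * pcompose (c_poly m) y
    = (y ^ m - 1) * (1 + y^2 + y^3 + y^5 + y^7) + (\<Sum>i<3. y ^ i) ^ 5 * (\<Sum>i<7. y ^ i)"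
proof -
  have "y^8 * pcompose (c_poly m) y
      = y^8 + y^9 + y^11 + y^13 + y^14 + y^16 + y ^ m * (1 + y^2 + y^3 + y^5 + y^7)"
    unfolding pcompose_c_poly by (rule power_8_mult_c_sum[OF assms])
  also have "\<dots> = (y ^ m - 1) * (1 + y^2 + y^3 + y^5 + y^7)
      + (1 + y^2 + y^3 + y^5 + y^7 + y^8 + y^9 + y^11 + y^13 + y^14 + y^16)"
    by (simp add: algebra_simps)
  also have "1 + y^2 + y^3 + y^5 + y^7 + y^8 + y^9 + y^11 + y^13 + y^14 + y^16
      = (\<Sum>i<3. y ^ i) ^ 5 * (\<Sum>i<7. y ^ i)"
    using two_eq_zero_F2 by (simp add: geometric_sums_3_7_char_two numeral_poly)
  finally show ?thesis .
qed

theorem proposition8: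
  fixes m k :: nat
  assumes "m \<ge> 17" and "k \<ge> 1"
  shows "gcd (pcompose (c_poly m) (monom 1 k)) (monom 1 m - 1) = 1 \<longleftrightarrow>
         (gcd m (3 * k) = gcd m k \<and> gcd m (7 * k) = gcd m k)"
proof -
  define X :: "F2 poly" where "X = [:0, 1:]"
  define Y where "Y = X ^ k"
  define C where "C = pcompose (c_poly m) Y"
  have "X ^ m - 1 dvd Y ^ m - 1"
    using power_minus_one_dvd_power_minus_one[of m "m * k" X]
    by (simp add: Y_def mult.commute flip: power_mult)
  then obtain R where R: "Y ^ m - 1 = (X ^ m - 1) * R" ..
  define Q where "Q = 1 + Y^2 + Y^3 + Y^5 + Y^7"
  have "Y^8 * C = (Y ^ m - 1) * Q + (\<Sum>i<3. Y ^ i) ^ 5 * (\<Sum>i<7. Y ^ i)"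
    unfolding C_def Q_def using assms(1) by (intro power_8_mult_pcompose_c_poly_F2) simp
  also have "(Y ^ m - 1) * Q = (R * Q) * (X ^ m - 1)"
    by (simp add: R ac_simps)
  finally have "coprime (Y^8 * C) (X ^ m - 1)
      \<longleftrightarrow> coprime ((\<Sum>i<3. Y ^ i) ^ 5 * (\<Sum>i<7. Y ^ i)) (X ^ m - 1)"
    by (simp add: coprime_iff_gcd_eq_1 gcd.commute[of _ "X ^ m - 1"] gcd_add_mult)
  moreover have "coprime (Y^8) (X ^ m - 1)"
    using coprime_self_power_minus_one[of m X] assms(1) by (simp add: Y_def)
  moreover have "coprime (\<Sum>i<p. Y ^ i) (X ^ m - 1) \<longleftrightarrow> gcd m (p * k) = gcd m k"
    if "p \<in> {3, 7}" for p
    unfolding X_def Y_def using that assms(1)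
    by (intro coprime_geometric_sum_monom_iff) (auto intro: of_nat_odd_F2)
  ultimately show ?thesis
    by (simp add: C_def Y_def X_def monom_altdef coprime_iff_gcd_eq_1[symmetric])
qed

end
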